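(* For all $n\ge1$ and each $\mathsf{stat}\in\{\mathsf{nest},\mathsf{inv}\}$, with $D_n^{(\mathsf{stat},\mathsf{exc})}(q,t)=\sum_{\sigma\in\mathfrak{D}_n}q^{\mathsf{stat}\,\sigma}t^{\mathsf{exc}\,\sigma}$, $$D_{n}^{(\mathsf{stat}, \mathsf{exc})}(q, t)=\left(\frac{1+xt}{1+x}\right)^{n}P^{(\mathsf{stat}, \mathsf{cpk},\mathsf{exc})}\left(\mathfrak{D}_n; q, \frac{(1+x)^{2}t}{(x+t)(1+xt)},\frac{x+t}{1+xt}\right),$$ equivalently, $$P^{(\mathsf{stat}, \mathsf{cpk},\mathsf{exc})}(\mathfrak{D}_n; q, x,t)=\left(\frac{1+u}{1+uv}\right)^{n}D_{n}^{(\mathsf{stat}, \mathsf{exc})}(q, v),$$ where $u=\frac{1+t^{2}-2xt-(1-t)\sqrt{(1+t)^{2}-4xt}}{2(1-x)t}$ and $v=\frac{(1+t)^{2}-2xt-(1+t)\sqrt{(1+t)^{2}-4xt}}{2xt}$.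
   Context: $\mathfrak{D}_n$ is the set of derangements of $[n]$. $P^{(\mathsf{stat}_1,\ldots,\mathsf{stat}_m)}(\Omega;t_1,\ldots,t_m)=\sum_{\sigma\in\Omega}\prod_jt_j^{\mathsf{stat}_j\sigma}$. $\mathsf{exc}\,\sigma=\#\{i:\sigma(i)>i\}$, $\mathsf{cpk}\,\sigma=\#\{x:\sigma^{-1}(x)<x>\sigma(x)\}$, $\mathsf{inv}$ the inversion number, $\mathsf{nest}\,\sigma=\sum_{i}\#\{j:j<i<\sigma(i)<\sigma(j)\text{ or }\sigma(j)<\sigma(i)\le i<j\}$. *)

theory Defs
  imports Complex_Main "HOL-Combinatorics.Permutations"
begin

definition derangements :: "nat \<Rightarrow> (nat \<Rightarrow> nat) set" where
  "derangements n = {\<sigma>. \<sigma> permutes {1..n} \<and> (\<forall>i\<in>{1..n}. \<sigma> i \<noteq> i)}"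

definition exc_stat :: "nat \<Rightarrow> (nat \<Rightarrow> nat) \<Rightarrow> nat" where
  "exc_stat n \<sigma> = card {i\<in>{1..n}. \<sigma> i > i}"

definition cpk_stat :: "nat \<Rightarrow> (nat \<Rightarrow> nat) \<Rightarrow> nat" where
  "cpk_stat n \<sigma> = card {x\<in>{1..n}. inv \<sigma> x < x \<and> \<sigma> x < x}"

definition inv_stat :: "nat \<Rightarrow> (nat \<Rightarrow> nat) \<Rightarrow> nat" where
  "inv_stat n \<sigma> = card {(i, j). i \<in> {1..n} \<and> j \<in> {1..n} \<and> i < j \<and> \<sigma> i > \<sigma> j}"

definition nest_stat :: "nat \<Rightarrow> (nat \<Rightarrow> nat) \<Rightarrow> nat" where
  "nest_stat n \<sigma> = (\<Sum>i\<in>{1..n}. card {j\<in>{1..n}.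
      (j < i \<and> i < \<sigma> i \<and> \<sigma> i < \<sigma> j) \<or> (\<sigma> j < \<sigma> i \<and> \<sigma> i \<le> i \<and> i < j)})"

definition P2 :: "(nat \<Rightarrow> nat) set \<Rightarrow> ((nat \<Rightarrow> nat) \<Rightarrow> nat) \<Rightarrow> ((nat \<Rightarrow> nat) \<Rightarrow> nat)
    \<Rightarrow> real \<Rightarrow> real \<Rightarrow> real" where
  "P2 \<Omega> s1 s2 t1 t2 = (\<Sum>\<sigma>\<in>\<Omega>. t1 ^ s1 \<sigma> * t2 ^ s2 \<sigma>)"

definition P3 :: "(nat \<Rightarrow> nat) set \<Rightarrow> ((nat \<Rightarrow> nat) \<Rightarrow> nat) \<Rightarrow> ((nat \<Rightarrow> nat) \<Rightarrow> nat)
    \<Rightarrow> ((nat \<Rightarrow> nat) \<Rightarrow> nat) \<Rightarrow> real \<Rightarrow> real \<Rightarrow> real \<Rightarrow> real" where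
  "P3 \<Omega> s1 s2 s3 t1 t2 t3 = (\<Sum>\<sigma>\<in>\<Omega>. t1 ^ s1 \<sigma> * t2 ^ s2 \<sigma> * t3 ^ s3 \<sigma>)"

end

theory Submission
  imports Defs
begin

text \<open>A derangement of \<open>[n]\<close> is built by placing the positions \<open>1, \<dots>, n\<close> in turn. After
  \<open>x\<close> steps there are as many open positions (image still to come) as free values (preimage
  still to come), say \<open>h\<close>; placing \<open>x + 1\<close> means choosing an open position to send to
  \<open>x + 1\<close> or not, and a free value for \<open>x + 1\<close> or not. The statistics \<open>nest\<close>, \<open>inv\<close>,
  \<open>cpk\<close> and \<open>exc\<close> split into contributions of the single steps, which depend only on \<open>h\<close>
  and on the ranks of the chosen position and value; summing over the ranks produces
  \<open>q\<close>-integers \<open>[h]\<^sub>q\<close>. So the generating function is obtained by iterating a tridiagonal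
  operator in \<open>h\<close> whose up, level and down weights for the \<open>cpk\<close>- and \<open>exc\<close>-weights
  \<open>a\<close> and \<open>b\<close> are \<open>b q\<^sup>\<dots>\<close>, \<open>(1 + b) q\<^sup>\<dots> [h]\<^sub>q\<close> and \<open>a [h]\<^sub>q\<^sup>2\<close>. Conjugating
  by \<open>\<rho>\<^sup>h\<close> scales the up and down weights by \<open>\<rho>\<close> and \<open>1 / \<rho>\<close>, and the substitution of the
  theorem, which rests on \<open>(x + t) + (1 + x t) = (1 + x) (1 + t)\<close>, is exactly the one that
  turns the operator for \<open>(1, t)\<close> into \<open>(1 + x t) / (1 + x)\<close> times the operator for
  \<open>(a, b)\<close>.\<close>

section \<open>Building derangements position by position\<close>

text \<open>A partial derangement of \<open>[x]\<close> records the first \<open>x\<close> positions of a derangement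
  of some \<open>[n]\<close>, \<open>n \<ge> x\<close>: a position whose image exceeds \<open>x\<close> is \<^emph>\<open>open\<close> and is
  mapped to \<open>0\<close>.\<close>

definition partial_derangements :: "nat \<Rightarrow> (nat \<Rightarrow> nat) set" where
  "partial_derangements x = {f. (\<forall>i. i \<notin> {1..x} \<longrightarrow> f i = i) \<and> (\<forall>i\<in>{1..x}. f i \<le> x \<and> f i \<noteq> i)
     \<and> inj_on f {i\<in>{1..x}. f i \<noteq> 0}}"

definition open_positions :: "nat \<Rightarrow> (nat \<Rightarrow> nat) \<Rightarrow> nat set" where
  "open_positions x f = {i\<in>{1..x}. f i = 0}"

definition free_values :: "nat \<Rightarrow> (nat \<Rightarrow> nat) \<Rightarrow> nat set" where
  "free_values x f = {1..x} - f ` {1..x}"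

text \<open>Position \<open>x + 1\<close> is placed by sending the open position \<open>u\<close> to \<open>x + 1\<close> and
  \<open>x + 1\<close> to the free value \<open>l\<close>; \<open>u = 0\<close> means that \<open>x + 1\<close> is the image of a later
  position, and \<open>l = 0\<close> that \<open>x + 1\<close> is itself open.\<close>

definition extend :: "nat \<Rightarrow> (nat \<Rightarrow> nat) \<Rightarrow> nat \<Rightarrow> nat \<Rightarrow> nat \<Rightarrow> nat" where
  "extend x f u l = (\<lambda>i. if i = Suc x then l else if i = u \<and> u \<noteq> 0 then Suc x else f i)"

definition extension_choices :: "nat \<Rightarrow> (nat \<Rightarrow> nat) \<Rightarrow> (nat \<times> nat) set" where
  "extension_choices x f = insert 0 (open_positions x f) \<times> insert 0 (free_values x f)"

lemma partial_derangementsD: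
  assumes "f \<in> partial_derangements x"
  shows "i \<notin> {1..x} \<Longrightarrow> f i = i" and "i \<in> {1..x} \<Longrightarrow> f i \<le> x" and "i \<in> {1..x} \<Longrightarrow> f i \<noteq> i"
    and "i \<in> {1..x} \<Longrightarrow> j \<in> {1..x} \<Longrightarrow> f i = f j \<Longrightarrow> f i \<noteq> 0 \<Longrightarrow> i = j"
  using assms unfolding partial_derangements_def inj_on_def by auto

lemma extension_choicesD:
  assumes "(u, l) \<in> extension_choices x f"
  shows "u \<le> x" and "l \<le> x" and "u \<noteq> 0 \<Longrightarrow> f u = 0" and "l \<noteq> 0 \<Longrightarrow> l \<notin> f ` {1..x}"
  using assms unfolding extension_choices_def open_positions_def free_values_def by auto

lemma extend_apply:
  "extend x f u l (Suc x) = l"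
  "u \<noteq> 0 \<Longrightarrow> u \<le> x \<Longrightarrow> extend x f u l u = Suc x"
  "i \<noteq> Suc x \<Longrightarrow> i \<noteq> u \<or> u = 0 \<Longrightarrow> extend x f u l i = f i"
  by (auto simp: extend_def)

lemma extend_in_partial_derangements:
  assumes f: "f \<in> partial_derangements x" and c: "(u, l) \<in> extension_choices x f"
  shows "extend x f u l \<in> partial_derangements (Suc x)"
proof -
  note D = partial_derangementsD[OF f] and C = extension_choicesD[OF c]
  let ?g = "extend x f u l"
  have "?g i = i" if "i \<notin> {1..Suc x}" for i
    using that D(1) C(1) by (auto simp: extend_def)
  moreover have "?g i \<le> Suc x \<and> ?g i \<noteq> i" if "i \<in> {1..Suc x}" for i
    using that D(2,3)[of i] C by (cases "i = Suc x"; cases "i = u") (auto simp: extend_def)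
  moreover have "i = j" if ij: "i \<in> {1..Suc x}" "j \<in> {1..Suc x}" and "?g i = ?g j" "?g i \<noteq> 0" for i j
  proof -
    have top: "k = Suc x" if "k \<in> {1..Suc x}" "?g k = l" "l \<noteq> 0" for k
      using that D(2)[of k] C by (cases "k = Suc x"; cases "k = u") (auto simp: extend_def)
    have at_u: "k = u" if "k \<in> {1..Suc x}" "?g k = Suc x" for k
      using that D(2)[of k] C by (cases "k = Suc x"; cases "k = u") (auto simp: extend_def)
    consider "i = Suc x \<or> j = Suc x" | "u \<noteq> 0 \<and> (i = u \<or> j = u)" | "i \<noteq> Suc x" "j \<noteq> Suc x" "i \<noteq> u \<or> u = 0" "j \<noteq> u \<or> u = 0"
      by blast
    then show ?thesis
    proof cases
      case 1 then show ?thesis using top ij that(3,4) extend_apply(1) by metis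
    next
      case 2 then show ?thesis using at_u ij that(3) extend_apply(2) C(1) by metis
    next
      case 3 then show ?thesis using D(4) ij that(3,4) extend_apply(3) by force
    qed
  qed
  ultimately show ?thesis unfolding partial_derangements_def inj_on_def by blast
qed

definition truncate :: "nat \<Rightarrow> (nat \<Rightarrow> nat) \<Rightarrow> nat \<Rightarrow> nat" where
  "truncate x g = (\<lambda>i. if i = Suc x then Suc x else if g i = Suc x then 0 else g i)"

lemma truncate_in_partial_derangements:
  assumes g: "g \<in> partial_derangements (Suc x)"
  shows "truncate x g \<in> partial_derangements x"
proof -
  note D = partial_derangementsD[OF g]
  have "truncate x g i = i" if "i \<notin> {1..x}" for i
    using that D(1)[of i] by (auto simp: truncate_def)
  moreover have "truncate x g i \<le> x \<and> truncate x g i \<noteq> i" if "i \<in> {1..x}" for i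
    using that D(2,3)[of i] by (auto simp: truncate_def)
  moreover have "i = j" if "i \<in> {1..x}" "j \<in> {1..x}" "truncate x g i = truncate x g j" "truncate x g i \<noteq> 0" for i j
    using that D(4)[of i j] by (auto simp: truncate_def split: if_splits)
  ultimately show ?thesis unfolding partial_derangements_def inj_on_def by blast
qed

lemma partial_derangements_SucE:
  assumes g: "g \<in> partial_derangements (Suc x)"
  obtains f u l where "f \<in> partial_derangements x" "(u, l) \<in> extension_choices x f" "g = extend x f u l"
proof -
  note D = partial_derangementsD[OF g]
  obtain u where u: "u = 0 \<and> (\<forall>i\<in>{1..x}. g i \<noteq> Suc x) \<or> u \<in> {1..x} \<and> g u = Suc x"
    by blast
  have u_unique: "i = u" if "i \<in> {1..x}" "g i = Suc x" for i
    using u that D(4)[of i u] by fastforce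
  define l where "l = g (Suc x)"
  have l: "l \<le> x" using D(2,3)[of "Suc x"] by (auto simp: l_def)
  have "(u, l) \<in> extension_choices x (truncate x g)"
  proof -
    have "l \<notin> truncate x g ` {1..x}" if l0: "l \<noteq> 0"
    proof
      assume "l \<in> truncate x g ` {1..x}"
      then obtain i where "i \<in> {1..x}" "g i = g (Suc x)"
        using l0 by (auto simp: truncate_def l_def split: if_splits)
      then show False using D(4)[of i "Suc x"] l0 by (simp add: l_def)
    qed
    then show ?thesis
      using u l by (auto simp: extension_choices_def open_positions_def free_values_def truncate_def)
  qed
  moreover have "g = extend x (truncate x g) u l"
  proof
    fix i
    have "g i \<noteq> Suc x" if "i \<noteq> Suc x" "\<not> (i = u \<and> u \<noteq> 0)"
      using that u_unique D(1)[of i] by (cases "i \<in> {1..x}") auto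
    then show "g i = extend x (truncate x g) u l i"
      using u by (auto simp: extend_def truncate_def l_def)
  qed
  ultimately show ?thesis using that truncate_in_partial_derangements[OF g] by blast
qed

lemma truncate_extend:
  assumes f: "f \<in> partial_derangements x" and c: "(u, l) \<in> extension_choices x f"
  shows "truncate x (extend x f u l) = f"
proof
  fix i
  show "truncate x (extend x f u l) i = f i"
    using partial_derangementsD(1,2)[OF f, of i] extension_choicesD[OF c]
    by (cases "i \<in> {1..x}"; cases "i = Suc x"; cases "i = u") (auto simp: truncate_def extend_def)
qed

lemma inj_on_extend:
  "inj_on (\<lambda>(f, u, l). extend x f u l) (Sigma (partial_derangements x) (extension_choices x))"
proof (rule inj_onI, clarsimp)
  fix f u l f' u' l'
  assume f: "f \<in> partial_derangements x" and c: "(u, l) \<in> extension_choices x f"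
    and f': "f' \<in> partial_derangements x" and c': "(u', l') \<in> extension_choices x f'"
    and eq: "extend x f u l = extend x f' u' l'"
  have "f = f'" using truncate_extend[OF f c] truncate_extend[OF f' c'] eq by simp
  moreover have "l = l'" using extend_apply(1) eq by metis
  moreover have "u = u'"
  proof -
    have differ: "extend x f v l v \<noteq> extend x f w l v"
      if "v \<noteq> 0" "v \<noteq> w" "(v, l) \<in> extension_choices x f" for f v w l
      using extension_choicesD[OF that(3)] that(1,2) by (auto simp: extend_def)
    show ?thesis
      using differ[of u u' l f] differ[of u' u l' f'] c c' eq \<open>f = f'\<close> \<open>l = l'\<close> by fastforce
  qed
  ultimately show "f = f' \<and> u = u' \<and> l = l'" by blast
qed

lemma partial_derangements_Suc:
  "partial_derangements (Suc x)
     = (\<lambda>(f, u, l). extend x f u l) ` Sigma (partial_derangements x) (extension_choices x)"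
proof
  show "partial_derangements (Suc x) \<subseteq> (\<lambda>(f, u, l). extend x f u l) ` Sigma (partial_derangements x) (extension_choices x)"
  proof
    fix g assume "g \<in> partial_derangements (Suc x)"
    then obtain f u l where "f \<in> partial_derangements x" "(u, l) \<in> extension_choices x f" "g = extend x f u l"
      by (rule partial_derangements_SucE)
    then show "g \<in> (\<lambda>(f, u, l). extend x f u l) ` Sigma (partial_derangements x) (extension_choices x)"
      by (auto intro!: image_eqI[where x = "(f, u, l)"])
  qed
qed (auto intro: extend_in_partial_derangements)

lemma partial_derangements_0: "partial_derangements 0 = {id}"
  by (auto simp: partial_derangements_def)

lemma finite_extension_choices: "finite (extension_choices x f)"
  by (auto simp: extension_choices_def open_positions_def free_values_def)

lemma finite_partial_derangements: "finite (partial_derangements x)"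
  by (induction x) (simp_all add: partial_derangements_0 partial_derangements_Suc finite_extension_choices)

lemma card_free_values:
  assumes f: "f \<in> partial_derangements x"
  shows "card (free_values x f) = card (open_positions x f)"
proof -
  let ?Z = "{i\<in>{1..x}. f i \<noteq> 0}"
  have "inj_on f ?Z" using f by (simp add: partial_derangements_def)
  moreover have "f ` ?Z \<subseteq> {1..x}" using partial_derangementsD(2)[OF f] by force
  moreover have "free_values x f = {1..x} - f ` ?Z" by (auto simp: free_values_def)
  ultimately have "card (free_values x f) = x - card ?Z" by (simp add: card_Diff_subset card_image finite_subset)
  moreover have "card ?Z + card (open_positions x f) = x"
  proof -
    have "?Z \<union> open_positions x f = {1..x}" by (auto simp: open_positions_def)
    moreover have "card (?Z \<union> open_positions x f) = card ?Z + card (open_positions x f)"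
      by (rule card_Un_disjoint) (auto simp: open_positions_def)
    ultimately show ?thesis by simp
  qed
  ultimately show ?thesis by simp
qed

lemma derangementsD:
  assumes "\<sigma> \<in> derangements n"
  shows "\<sigma> permutes {1..n}" and "i \<in> {1..n} \<Longrightarrow> \<sigma> i \<noteq> i" and "\<sigma> i \<in> {1..n} \<longleftrightarrow> i \<in> {1..n}"
    and "i \<notin> {1..n} \<Longrightarrow> \<sigma> i = i" and "inj \<sigma>"
  using assms unfolding derangements_def by (auto dest: permutes_in_image permutes_not_in permutes_inj)

lemma derangements_eq_closed_partial_derangements:
  "derangements n = {f \<in> partial_derangements n. open_positions n f = {}}"
proof (intro set_eqI iffI)
  fix f assume "f \<in> {f \<in> partial_derangements n. open_positions n f = {}}"
  then have f: "f \<in> partial_derangements n" and closed: "\<forall>i\<in>{1..n}. f i \<noteq> 0"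
    by (auto simp: open_positions_def)
  note D = partial_derangementsD[OF f]
  have "{i\<in>{1..n}. f i \<noteq> 0} = {1..n}" using closed by blast
  then have inj: "inj_on f {1..n}" using f by (simp add: partial_derangements_def)
  have "f ` {1..n} \<subseteq> {1..n}" using D(2) closed by fastforce
  then have "bij_betw f {1..n} {1..n}"
    using endo_inj_surj[OF _ _ inj] inj by (simp add: bij_betw_def)
  then have "f permutes {1..n}" using D(1) by (intro bij_imp_permutes) auto
  then show "f \<in> derangements n" using D(3) by (simp add: derangements_def)
next
  fix f assume "f \<in> derangements n"
  note E = derangementsD[OF this]
  have range: "f i \<in> {1..n}" if "i \<in> {1..n}" for i using E(3) that by blast
  then have "open_positions n f = {}" by (force simp: open_positions_def)
  moreover have "f \<in> partial_derangements n"
    unfolding partial_derangements_def using range E(2,4) inj_on_subset[OF E(5)] by auto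
  ultimately show "f \<in> {f \<in> partial_derangements n. open_positions n f = {}}" by simp
qed

section \<open>Local statistics\<close>

text \<open>The contribution of position \<open>y\<close> to each statistic only depends on how \<open>[y]\<close> is
  mapped into \<open>[y]\<close>, so it is fixed as soon as \<open>y\<close> has been placed. For a derangement \<open>\<sigma>\<close>,
  \<open>upper_nestings \<sigma> (\<sigma> j)\<close> counts the \<open>i\<close> with \<open>i < j < \<sigma> j < \<sigma> i\<close> and
  \<open>lower_nestings \<sigma> y\<close> the \<open>j\<close> with \<open>\<sigma> j < \<sigma> y < y < j\<close>.\<close>

definition upper_nestings :: "(nat \<Rightarrow> nat) \<Rightarrow> nat \<Rightarrow> nat" where
  "upper_nestings f y = (\<Sum>i\<in>{1..<y}. if f i = y then card {j\<in>{1..<i}. f j \<notin> {1..y}} else 0)"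

definition lower_nestings :: "(nat \<Rightarrow> nat) \<Rightarrow> nat \<Rightarrow> nat" where
  "lower_nestings f y = (if 0 < f y \<and> f y < y then card {v \<in> free_values y f. v < f y} else 0)"

definition inversion_excess :: "(nat \<Rightarrow> nat) \<Rightarrow> nat \<Rightarrow> nat" where
  "inversion_excess f y = (if f y \<notin> {1..y} then card (free_values y f) else 0)
     + (if y \<notin> f ` {1..y} then card {i\<in>{1..<y}. f i \<notin> {1..y}} else 0)"

definition is_cycle_peak :: "(nat \<Rightarrow> nat) \<Rightarrow> nat \<Rightarrow> bool" where
  "is_cycle_peak f y \<longleftrightarrow> y \<in> f ` {1..<y} \<and> 0 < f y \<and> f y < y"

definition is_excedance :: "(nat \<Rightarrow> nat) \<Rightarrow> nat \<Rightarrow> bool" where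
  "is_excedance f y \<longleftrightarrow> f y \<notin> {1..y}"

definition agree_on_prefix :: "nat \<Rightarrow> (nat \<Rightarrow> nat) \<Rightarrow> (nat \<Rightarrow> nat) \<Rightarrow> bool" where
  "agree_on_prefix y f g \<longleftrightarrow>
     (\<forall>i\<in>{1..y}. (f i \<in> {1..y} \<longleftrightarrow> g i \<in> {1..y}) \<and> (f i \<in> {1..y} \<longrightarrow> f i = g i))"

lemma agree_on_prefixD:
  assumes "agree_on_prefix y f g" and "i \<in> {1..y}"
  shows "f i \<in> {1..y} \<longleftrightarrow> g i \<in> {1..y}" and "f i \<in> {1..y} \<Longrightarrow> f i = g i"
    and "f i = y \<longleftrightarrow> g i = y"
proof -
  show in_iff: "f i \<in> {1..y} \<longleftrightarrow> g i \<in> {1..y}" and eq: "f i \<in> {1..y} \<Longrightarrow> f i = g i"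
    using assms unfolding agree_on_prefix_def by blast+
  have "y \<in> {1..y}" using assms(2) by simp
  then show "f i = y \<longleftrightarrow> g i = y" using in_iff eq by metis
qed

lemma agree_on_prefix_image:
  assumes "agree_on_prefix y f g" and "v \<in> {1..y}"
  shows "v \<in> f ` {1..y} \<longleftrightarrow> v \<in> g ` {1..y}"
proof -
  have "v = f i \<longleftrightarrow> v = g i" if "i \<in> {1..y}" for i
    using assms that unfolding agree_on_prefix_def by metis
  then show ?thesis unfolding image_iff by blast
qed

lemma agree_on_prefix_free_values:
  "agree_on_prefix y f g \<Longrightarrow> free_values y f = free_values y g"
  unfolding free_values_def using agree_on_prefix_image by blast

lemma agree_on_prefix_outside:
  assumes "agree_on_prefix y f g" and "k \<le> y"
  shows "{i\<in>{1..<k}. f i \<notin> {1..y}} = {i\<in>{1..<k}. g i \<notin> {1..y}}"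
proof (intro Collect_cong conj_cong refl)
  fix i assume "i \<in> {1..<k}"
  then show "f i \<notin> {1..y} \<longleftrightarrow> g i \<notin> {1..y}" using agree_on_prefixD(1)[OF assms(1), of i] assms(2) by simp
qed

lemma agree_on_prefix_local_stats:
  assumes a: "agree_on_prefix y f g"
  shows "upper_nestings f y = upper_nestings g y" and "lower_nestings f y = lower_nestings g y"
    and "inversion_excess f y = inversion_excess g y" and "is_cycle_peak f y = is_cycle_peak g y"
    and "is_excedance f y = is_excedance g y"
proof -
  note D = agree_on_prefixD[OF a] and outside = agree_on_prefix_outside[OF a]
  have free: "free_values y f = free_values y g" using agree_on_prefix_free_values[OF a] .
  show "upper_nestings f y = upper_nestings g y"
    unfolding upper_nestings_def
  proof (intro sum.cong refl)
    fix i assume "i \<in> {1..<y}"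
    then show "(if f i = y then card {j\<in>{1..<i}. f j \<notin> {1..y}} else 0)
      = (if g i = y then card {j\<in>{1..<i}. g j \<notin> {1..y}} else 0)"
      using D(3)[of i] outside[of i] by simp
  qed
  show "is_cycle_peak f y = is_cycle_peak g y"
  proof (cases "y = 0")
    case False
    have "\<forall>i\<in>{1..<y}. f i = y \<longleftrightarrow> g i = y" using D(3) by simp
    then have "y \<in> f ` {1..<y} \<longleftrightarrow> y \<in> g ` {1..<y}"
      unfolding image_iff by (metis (no_types, lifting))
    then show ?thesis using D(1,2)[of y] False by (auto simp: is_cycle_peak_def)
  qed (simp add: is_cycle_peak_def)
  show "lower_nestings f y = lower_nestings g y"
  proof (cases "y = 0")
    case False
    then show ?thesis using D(1,2)[of y] free by (auto simp: lower_nestings_def)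
  qed (simp add: lower_nestings_def)
  show "inversion_excess f y = inversion_excess g y"
  proof (cases "y = 0")
    case False
    then show ?thesis using D(1)[of y] outside[of y] free agree_on_prefix_image[OF a, of y]
      by (simp add: inversion_excess_def)
  qed (simp add: inversion_excess_def free_values_def)
  show "is_excedance f y = is_excedance g y"
    using D(1)[of y] by (cases "y = 0") (auto simp: is_excedance_def)
qed

lemma agree_on_prefix_extend:
  assumes f: "f \<in> partial_derangements x" and c: "(u, l) \<in> extension_choices x f" and "y \<le> x"
  shows "agree_on_prefix y f (extend x f u l)"
  unfolding agree_on_prefix_def
proof
  fix i assume "i \<in> {1..y}"
  then show "(f i \<in> {1..y} \<longleftrightarrow> extend x f u l i \<in> {1..y}) \<and> (f i \<in> {1..y} \<longrightarrow> f i = extend x f u l i)"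
    using \<open>y \<le> x\<close> extension_choicesD(3)[OF c] by (cases "i = u") (auto simp: extend_def)
qed

lemma open_positions_extend:
  assumes f: "f \<in> partial_derangements x" and c: "(u, l) \<in> extension_choices x f"
  shows "open_positions (Suc x) (extend x f u l)
    = (open_positions x f - {u}) \<union> (if l = 0 then {Suc x} else {})"
  using partial_derangementsD(2)[OF f] extension_choicesD[OF c]
  by (auto simp: open_positions_def extend_def)

lemma mem_image_extend:
  assumes f: "f \<in> partial_derangements x" and c: "(u, l) \<in> extension_choices x f"
  shows "v \<in> {1..x} \<Longrightarrow> v \<in> extend x f u l ` {1..x} \<longleftrightarrow> v \<in> f ` {1..x}"
    and "Suc x \<in> extend x f u l ` {1..x} \<longleftrightarrow> u \<noteq> 0"
proof -
  note C = extension_choicesD[OF c]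
  have g: "extend x f u l i = (if i = u \<and> u \<noteq> 0 then Suc x else f i)" if "i \<in> {1..x}" for i
    using that by (simp add: extend_def)
  show "v \<in> extend x f u l ` {1..x} \<longleftrightarrow> v \<in> f ` {1..x}" if "v \<in> {1..x}"
  proof
    assume "v \<in> extend x f u l ` {1..x}"
    then obtain i where "i \<in> {1..x}" "v = extend x f u l i" by blast
    then show "v \<in> f ` {1..x}" using g that by (cases "i = u \<and> u \<noteq> 0") auto
  next
    assume "v \<in> f ` {1..x}"
    then obtain i where "i \<in> {1..x}" "v = f i" by blast
    moreover have "\<not> (i = u \<and> u \<noteq> 0)" using C(3) that calculation by auto
    ultimately show "v \<in> extend x f u l ` {1..x}" using g by (metis image_eqI)
  qed
  show "Suc x \<in> extend x f u l ` {1..x} \<longleftrightarrow> u \<noteq> 0"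
  proof
    assume "Suc x \<in> extend x f u l ` {1..x}"
    then obtain i where "i \<in> {1..x}" "Suc x = extend x f u l i" by blast
    then show "u \<noteq> 0" using g partial_derangementsD(2)[OF f] by (cases "i = u \<and> u \<noteq> 0") force+
  next
    assume "u \<noteq> 0"
    then have "u \<in> {1..x}" using C(1) by simp
    then show "Suc x \<in> extend x f u l ` {1..x}" using g[of u] \<open>u \<noteq> 0\<close> by (metis image_eqI)
  qed
qed

lemma free_values_extend:
  assumes f: "f \<in> partial_derangements x" and c: "(u, l) \<in> extension_choices x f"
  shows "free_values (Suc x) (extend x f u l)
    = (free_values x f - {l}) \<union> (if u = 0 then {Suc x} else {})"
proof (rule set_eqI)
  fix v
  have ivl: "{1..Suc x} = insert (Suc x) {1..x}" by auto
  have "v \<in> free_values (Suc x) (extend x f u l)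
      \<longleftrightarrow> (v = Suc x \<or> v \<in> {1..x}) \<and> v \<noteq> l \<and> v \<notin> extend x f u l ` {1..x}"
    unfolding free_values_def ivl image_insert extend_apply(1) by blast
  also have "\<dots> \<longleftrightarrow> v \<in> (free_values x f - {l}) \<union> (if u = 0 then {Suc x} else {})"
    using mem_image_extend(1)[OF f c, of v] mem_image_extend(2)[OF f c] extension_choicesD(2)[OF c]
    by (cases "v = Suc x") (auto simp: free_values_def)
  finally show "v \<in> free_values (Suc x) (extend x f u l)
    \<longleftrightarrow> v \<in> (free_values x f - {l}) \<union> (if u = 0 then {Suc x} else {})" .
qed

lemma extend_apply_prefix:
  assumes f: "f \<in> partial_derangements x" and i: "i \<in> {1..x}"
  shows "extend x f u l i = Suc x \<longleftrightarrow> i = u"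
    and "extend x f u l i \<le> Suc x"
    and "extend x f u l i = 0 \<longleftrightarrow> i \<in> open_positions x f - {u}"
  using i partial_derangementsD(2)[OF f i] by (auto simp: extend_def open_positions_def)

lemma upper_nestings_extend:
  assumes f: "f \<in> partial_derangements x" and c: "(u, l) \<in> extension_choices x f"
  shows "upper_nestings (extend x f u l) (Suc x) = (if u = 0 then 0 else card {j \<in> open_positions x f. j < u})"
proof -
  let ?g = "extend x f u l"
  have "upper_nestings ?g (Suc x)
      = (\<Sum>i\<in>{1..x}. if i = u then card {j\<in>{1..<i}. ?g j \<notin> {1..Suc x}} else 0)"
    unfolding upper_nestings_def using extend_apply_prefix(1)[OF f, where u = u and l = l]
    by (intro sum.cong) auto
  also have "\<dots> = (if u = 0 then 0 else card {j\<in>{1..<u}. ?g j \<notin> {1..Suc x}})"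
    using extension_choicesD(1)[OF c] by simp
  also have "{j\<in>{1..<u}. ?g j \<notin> {1..Suc x}} = {j \<in> open_positions x f. j < u}"
  proof (rule set_eqI)
    fix j
    show "j \<in> {j\<in>{1..<u}. ?g j \<notin> {1..Suc x}} \<longleftrightarrow> j \<in> {j \<in> open_positions x f. j < u}"
    proof (cases "j \<in> {1..x}")
      case True
      then show ?thesis
        using extend_apply_prefix(2,3)[OF f True, where u = u and l = l] by (auto simp: open_positions_def)
    next
      case False
      then show ?thesis using extension_choicesD(1)[OF c] by (auto simp: open_positions_def)
    qed
  qed
  finally show ?thesis .
qed

lemma lower_nestings_extend:
  assumes f: "f \<in> partial_derangements x" and c: "(u, l) \<in> extension_choices x f"
  shows "lower_nestings (extend x f u l) (Suc x) = (if l = 0 then 0 else card {v \<in> free_values x f. v < l})"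
proof -
  have "{v \<in> free_values (Suc x) (extend x f u l). v < l} = {v \<in> free_values x f. v < l}"
    using extension_choicesD(2)[OF c] by (auto simp: free_values_extend[OF f c])
  then show ?thesis
    using extension_choicesD(2)[OF c] by (simp add: lower_nestings_def extend_apply(1))
qed

lemma inversion_excess_extend:
  assumes f: "f \<in> partial_derangements x" and c: "(u, l) \<in> extension_choices x f"
  defines "h \<equiv> card (open_positions x f)"
  shows "inversion_excess (extend x f u l) (Suc x)
    = (if l = 0 then h + (if u = 0 then 1 else 0) else 0) + (if u = 0 then h else 0)"
proof -
  define g where "g = extend x f u l"
  have ivl: "{1..Suc x} = insert (Suc x) {1..x}" "{1..<Suc x} = {1..x}" by auto
  have top: "g (Suc x) \<notin> {1..Suc x} \<longleftrightarrow> l = 0"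
    using extension_choicesD(2)[OF c] by (auto simp: g_def extend_apply(1))
  have free: "card (free_values (Suc x) g) = h + (if u = 0 then 1 else 0)" if "l = 0"
  proof -
    have "free_values (Suc x) g = free_values x f \<union> (if u = 0 then {Suc x} else {})"
      using free_values_extend[OF f c] that by (simp add: g_def free_values_def)
    then show ?thesis using card_free_values[OF f] by (simp add: h_def free_values_def)
  qed
  have hit: "Suc x \<notin> g ` {1..Suc x} \<longleftrightarrow> u = 0"
    unfolding g_def ivl(1) image_insert extend_apply(1)
    using mem_image_extend(2)[OF f c] extension_choicesD(2)[OF c] by simp
  have "{i\<in>{1..<Suc x}. g i \<notin> {1..Suc x}} = open_positions x f" if "u = 0"
  proof -
    have "g i \<notin> {1..Suc x} \<longleftrightarrow> f i = 0" if "i \<in> {1..x}" for i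
      using extend_apply_prefix(2,3)[OF f that, where u = u and l = l] \<open>u = 0\<close> that by (auto simp: g_def open_positions_def)
    then show ?thesis unfolding ivl(2) open_positions_def by blast
  qed
  then show ?thesis
    unfolding g_def[symmetric] inversion_excess_def using top free hit by (simp add: h_def)
qed

lemma is_cycle_peak_extend:
  assumes f: "f \<in> partial_derangements x" and c: "(u, l) \<in> extension_choices x f"
  shows "is_cycle_peak (extend x f u l) (Suc x) \<longleftrightarrow> u \<noteq> 0 \<and> l \<noteq> 0"
proof -
  have "{1..<Suc x} = {1..x}" by auto
  then show ?thesis
    using mem_image_extend(2)[OF f c] extension_choicesD(2)[OF c]
    by (auto simp: is_cycle_peak_def extend_apply(1))
qed

lemma is_excedance_extend:
  assumes "(u, l) \<in> extension_choices x f"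
  shows "is_excedance (extend x f u l) (Suc x) \<longleftrightarrow> l = 0"
  using extension_choicesD(2)[OF assms] by (auto simp: is_excedance_def extend_apply(1))

lemma card_open_positions_extend:
  assumes f: "f \<in> partial_derangements x" and c: "(u, l) \<in> extension_choices x f"
  shows "card (open_positions (Suc x) (extend x f u l))
    = (if u = 0 then card (open_positions x f) else card (open_positions x f) - 1) + (if l = 0 then 1 else 0)"
proof -
  have "finite (open_positions x f)" "Suc x \<notin> open_positions x f" "0 \<notin> open_positions x f"
    by (auto simp: open_positions_def)
  moreover have "u \<noteq> 0 \<Longrightarrow> u \<in> open_positions x f"
    using c by (auto simp: extension_choices_def)
  ultimately show ?thesis
    by (auto simp: open_positions_extend[OF f c] card_insert_if)
qed

section \<open>The transfer operator\<close>

datatype stat_kind = Nest | Inv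

definition local_stat :: "stat_kind \<Rightarrow> (nat \<Rightarrow> nat) \<Rightarrow> nat \<Rightarrow> nat" where
  "local_stat s f y = upper_nestings f y + lower_nestings f y + (if s = Inv then inversion_excess f y else 0)"

definition step_weight :: "stat_kind \<Rightarrow> real \<Rightarrow> real \<Rightarrow> real \<Rightarrow> (nat \<Rightarrow> nat) \<Rightarrow> nat \<Rightarrow> real" where
  "step_weight s q a b f y =
     q ^ local_stat s f y * (if is_cycle_peak f y then a else 1) * (if is_excedance f y then b else 1)"

definition weight :: "stat_kind \<Rightarrow> real \<Rightarrow> real \<Rightarrow> real \<Rightarrow> nat \<Rightarrow> (nat \<Rightarrow> nat) \<Rightarrow> real" where
  "weight s q a b x f = (\<Prod>y\<in>{1..x}. step_weight s q a b f y)"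

definition weighted_sum :: "stat_kind \<Rightarrow> real \<Rightarrow> real \<Rightarrow> real \<Rightarrow> nat \<Rightarrow> (nat \<Rightarrow> real) \<Rightarrow> real" where
  "weighted_sum s q a b x \<phi> =
     (\<Sum>f\<in>partial_derangements x. weight s q a b x f * \<phi> (card (open_positions x f)))"

definition q_int :: "real \<Rightarrow> nat \<Rightarrow> real" where
  "q_int q h = (\<Sum>r<h. q ^ r)"

text \<open>At \<open>h = 0\<close> the junk value \<open>\<phi> (0 - 1)\<close> is multiplied by \<open>q_int q 0 = 0\<close>.\<close>

definition transfer_op :: "stat_kind \<Rightarrow> real \<Rightarrow> real \<Rightarrow> real \<Rightarrow> (nat \<Rightarrow> real) \<Rightarrow> nat \<Rightarrow> real" where
  "transfer_op s q a b \<phi> h =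
     b * q ^ (if s = Inv then 2 * h + 1 else 0) * \<phi> (h + 1)
     + (1 + b) * q ^ (if s = Inv then h else 0) * q_int q h * \<phi> h
     + a * (q_int q h)\<^sup>2 * \<phi> (h - 1)"

lemma sum_power_card_less:
  fixes S :: "nat set"
  assumes "finite S"
  shows "(\<Sum>u\<in>S. q ^ card {v\<in>S. v < u}) = q_int q (card S)"
  using assms
proof (induction rule: finite_linorder_max_induct)
  case (insert b A)
  let ?r = "\<lambda>u. card {v\<in>insert b A. v < u}"
  have "b \<notin> A" using insert.hyps(2) by blast
  have below: "?r u = card {v\<in>A. v < u}" if "u \<in> A" for u
    using insert.hyps(2) that by (intro arg_cong[where f = card]) auto
  have top: "?r b = card A"
    using insert.hyps(2) by (intro arg_cong[where f = card]) auto
  have "(\<Sum>u\<in>insert b A. q ^ ?r u) = q ^ ?r b + (\<Sum>u\<in>A. q ^ ?r u)"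
    using insert.hyps(1) \<open>b \<notin> A\<close> by (rule sum.insert)
  also have "\<dots> = q ^ card A + q_int q (card A)"
    using below top insert.IH by simp
  also have "\<dots> = q_int q (card (insert b A))"
    using insert.hyps(1) \<open>b \<notin> A\<close> by (simp add: q_int_def)
  finally show ?case .
qed (simp add: q_int_def)

lemma weight_extend:
  assumes f: "f \<in> partial_derangements x" and c: "(u, l) \<in> extension_choices x f"
  shows "weight s q a b (Suc x) (extend x f u l) = weight s q a b x f * step_weight s q a b (extend x f u l) (Suc x)"
proof -
  have "step_weight s q a b (extend x f u l) y = step_weight s q a b f y" if "y \<in> {1..x}" for y
    using agree_on_prefix_local_stats[OF agree_on_prefix_extend[OF f c, of y]] that
    by (simp add: step_weight_def local_stat_def)
  moreover have "{1..Suc x} = insert (Suc x) {1..x}" by auto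
  ultimately show ?thesis by (simp add: weight_def mult.commute)
qed

lemma step_weight_extend:
  assumes f: "f \<in> partial_derangements x" and c: "(u, l) \<in> extension_choices x f"
  defines "h \<equiv> card (open_positions x f)"
  shows "step_weight s q a b (extend x f u l) (Suc x) * \<phi> (card (open_positions (Suc x) (extend x f u l)))
    = (if u = 0 then 1 else q ^ card {j \<in> open_positions x f. j < u})
      * (if l = 0 then 1 else q ^ card {v \<in> free_values x f. v < l})
      * (if u = 0 \<and> l = 0 then b * q ^ (if s = Inv then 2 * h + 1 else 0) * \<phi> (h + 1)
         else if u = 0 then q ^ (if s = Inv then h else 0) * \<phi> h
         else if l = 0 then b * q ^ (if s = Inv then h else 0) * \<phi> h
         else a * \<phi> (h - 1))"
proof -
  have "h \<noteq> 0" if "u \<noteq> 0"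
    using c that by (auto simp: h_def extension_choices_def open_positions_def)
  then show ?thesis
    unfolding step_weight_def local_stat_def
      upper_nestings_extend[OF f c] lower_nestings_extend[OF f c] inversion_excess_extend[OF f c]
      is_cycle_peak_extend[OF f c] is_excedance_extend[OF c] card_open_positions_extend[OF f c] h_def[symmetric]
    by (cases "u = 0"; cases "l = 0") (simp_all add: power_add power_mult power2_eq_square mult_ac)
qed

lemma sum_insert_zero_product:
  fixes U L :: "nat \<Rightarrow> real" and K :: "bool \<Rightarrow> bool \<Rightarrow> real"
  assumes A: "finite A" "0 \<notin> A" and B: "finite B" "0 \<notin> B"
  shows "(\<Sum>(u, l)\<in>insert 0 A \<times> insert 0 B. U u * L l * K (u = 0) (l = 0))
    = U 0 * (L 0 * K True True + sum L B * K True False)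
      + sum U A * (L 0 * K False True + sum L B * K False False)"
proof -
  have row: "(\<Sum>l\<in>insert 0 B. U u * L l * K (u = 0) (l = 0))
      = U u * (L 0 * K (u = 0) True + sum L B * K (u = 0) False)" for u
  proof -
    have "(\<Sum>l\<in>B. U u * L l * K (u = 0) (l = 0)) = (\<Sum>l\<in>B. U u * L l * K (u = 0) False)"
      using B(2) by (intro sum.cong refl) (metis (full_types))
    then show ?thesis
      unfolding sum.insert[OF B] by (simp add: sum_distrib_left sum_distrib_right algebra_simps)
  qed
  have "(\<Sum>u\<in>A. U u * (L 0 * K (u = 0) True + sum L B * K (u = 0) False))
      = (\<Sum>u\<in>A. U u * (L 0 * K False True + sum L B * K False False))"
    using A(2) by (intro sum.cong refl) (metis (full_types))
  then show ?thesis
    unfolding sum.cartesian_product[symmetric] row sum.insert[OF A] by (simp add: sum_distrib_right)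
qed

lemma sum_extension_choices:
  assumes f: "f \<in> partial_derangements x"
  shows "(\<Sum>(u, l)\<in>extension_choices x f.
      step_weight s q a b (extend x f u l) (Suc x) * \<phi> (card (open_positions (Suc x) (extend x f u l))))
    = transfer_op s q a b \<phi> (card (open_positions x f))"
proof -
  define h where "h = card (open_positions x f)"
  define U where "U u = (if u = 0 then 1 else q ^ card {j \<in> open_positions x f. j < u})" for u
  define L where "L l = (if l = 0 then 1 else q ^ card {v \<in> free_values x f. v < l})" for l
  define K where "K u_zero l_zero =
    (if u_zero \<and> l_zero then b * q ^ (if s = Inv then 2 * h + 1 else 0) * \<phi> (h + 1)
     else if u_zero then q ^ (if s = Inv then h else 0) * \<phi> h
     else if l_zero then b * q ^ (if s = Inv then h else 0) * \<phi> h
     else a * \<phi> (h - 1))" for u_zero l_zero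
  have fin: "finite (open_positions x f)" "0 \<notin> open_positions x f"
    "finite (free_values x f)" "0 \<notin> free_values x f"
    by (auto simp: open_positions_def free_values_def)
  have "sum U (open_positions x f) = q_int q h"
    unfolding h_def sum_power_card_less[OF fin(1), symmetric] using fin(2)
    by (intro sum.cong) (auto simp: U_def)
  moreover have "sum L (free_values x f) = q_int q h"
    unfolding h_def card_free_values[OF f, symmetric] sum_power_card_less[OF fin(3), symmetric]
    using fin(4) by (intro sum.cong) (auto simp: L_def)
  moreover have "(\<Sum>(u, l)\<in>extension_choices x f.
      step_weight s q a b (extend x f u l) (Suc x) * \<phi> (card (open_positions (Suc x) (extend x f u l))))
    = (\<Sum>(u, l)\<in>insert 0 (open_positions x f) \<times> insert 0 (free_values x f). U u * L l * K (u = 0) (l = 0))"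
    using step_weight_extend[OF f] unfolding U_def L_def K_def h_def
    by (intro sum.cong) (auto simp: extension_choices_def)
  ultimately show ?thesis
    unfolding sum_insert_zero_product[OF fin] h_def[symmetric]
    by (simp add: U_def L_def K_def transfer_op_def algebra_simps power2_eq_square)
qed

lemma weighted_sum_Suc:
  "weighted_sum s q a b (Suc x) \<phi> = weighted_sum s q a b x (transfer_op s q a b \<phi>)"
proof -
  let ?term = "\<lambda>g. weight s q a b (Suc x) g * \<phi> (card (open_positions (Suc x) g))"
  have "weighted_sum s q a b (Suc x) \<phi>
      = (\<Sum>(f, u, l)\<in>Sigma (partial_derangements x) (extension_choices x). ?term (extend x f u l))"
    unfolding weighted_sum_def partial_derangements_Suc sum.reindex[OF inj_on_extend]
    by (simp add: case_prod_beta comp_def)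
  also have "\<dots> = (\<Sum>f\<in>partial_derangements x. \<Sum>(u, l)\<in>extension_choices x f. ?term (extend x f u l))"
    by (rule sum.Sigma[symmetric]) (simp_all add: finite_partial_derangements finite_extension_choices)
  also have "\<dots> = (\<Sum>f\<in>partial_derangements x.
      weight s q a b x f * transfer_op s q a b \<phi> (card (open_positions x f)))"
  proof (intro sum.cong refl)
    fix f assume f: "f \<in> partial_derangements x"
    have "(\<Sum>(u, l)\<in>extension_choices x f. ?term (extend x f u l))
      = weight s q a b x f * (\<Sum>(u, l)\<in>extension_choices x f. step_weight s q a b (extend x f u l) (Suc x)
          * \<phi> (card (open_positions (Suc x) (extend x f u l))))"
      unfolding sum_distrib_left using weight_extend[OF f] by (intro sum.cong) (auto simp: mult_ac)
    then show "(\<Sum>(u, l)\<in>extension_choices x f. ?term (extend x f u l))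
      = weight s q a b x f * transfer_op s q a b \<phi> (card (open_positions x f))"
      by (simp only: sum_extension_choices[OF f])
  qed
  finally show ?thesis by (simp add: weighted_sum_def)
qed

lemma weighted_sum_0: "weighted_sum s q a b 0 \<phi> = \<phi> 0"
  by (simp add: weighted_sum_def partial_derangements_0 weight_def open_positions_def)

lemma weighted_sum_scale: "weighted_sum s q a b x (\<lambda>h. c * \<phi> h) = c * weighted_sum s q a b x \<phi>"
  by (simp add: weighted_sum_def sum_distrib_left mult_ac)

lemma transfer_op_conjugate:
  assumes "b = c * \<rho> * b'" and "a * \<rho> = c * a'" and "1 + b = c * (1 + b')"
  shows "\<rho> ^ h * transfer_op s q a b \<phi> h = c * transfer_op s q a' b' (\<lambda>k. \<rho> ^ k * \<phi> k) h"
proof (cases h)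
  case 0
  then show ?thesis using assms by (simp add: transfer_op_def q_int_def algebra_simps)
next
  case (Suc k)
  then show ?thesis using assms by (simp add: transfer_op_def algebra_simps)
qed

lemma weighted_sum_conjugate:
  assumes "b = c * \<rho> * b'" and "a * \<rho> = c * a'" and "1 + b = c * (1 + b')"
  shows "weighted_sum s q a b x \<phi> = c ^ x * weighted_sum s q a' b' x (\<lambda>h. \<rho> ^ h * \<phi> h)"
proof (induction x arbitrary: \<phi>)
  case 0
  then show ?case by (simp add: weighted_sum_0)
next
  case (Suc x)
  have "weighted_sum s q a b (Suc x) \<phi> = c ^ x * weighted_sum s q a' b' x (\<lambda>h. \<rho> ^ h * transfer_op s q a b \<phi> h)"
    unfolding weighted_sum_Suc by (rule Suc.IH)
  also have "\<dots> = c ^ Suc x * weighted_sum s q a' b' x (transfer_op s q a' b' (\<lambda>h. \<rho> ^ h * \<phi> h))"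
    unfolding transfer_op_conjugate[OF assms] weighted_sum_scale by simp
  finally show ?case unfolding weighted_sum_Suc .
qed

section \<open>The statistics of a derangement\<close>

definition inversions :: "nat \<Rightarrow> (nat \<Rightarrow> nat) \<Rightarrow> (nat \<times> nat) set" where
  "inversions n \<sigma> = {(i, j). i \<in> {1..n} \<and> j \<in> {1..n} \<and> i < j \<and> \<sigma> j < \<sigma> i}"

lemma finite_inversions: "finite (inversions n \<sigma>)"
  by (rule finite_subset[of _ "{1..n} \<times> {1..n}"]) (auto simp: inversions_def)

lemma sum_card_fibers:
  assumes "finite S" and "finite T" and "g ` S \<subseteq> T"
  shows "(\<Sum>y\<in>T. card {p\<in>S. g p = y}) = card S"
  using sum.group[OF assms, of "\<lambda>_. 1 :: nat"] by (simp only: card_eq_sum)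

lemma card_fst_fiber: "card {p\<in>S. fst p = i} = card {j. (i, j) \<in> S}"
proof -
  have "{p\<in>S. fst p = i} = Pair i ` {j. (i, j) \<in> S}" by auto
  then show ?thesis by (simp add: card_image inj_on_def)
qed

lemma card_snd_fiber: "card {p\<in>S. snd p = j} = card {i. (i, j) \<in> S}"
proof -
  have "{p\<in>S. snd p = j} = (\<lambda>i. (i, j)) ` {i. (i, j) \<in> S}" by auto
  then show ?thesis by (simp add: card_image inj_on_def)
qed

lemma card_free_values_derangement:
  assumes d: "\<sigma> \<in> derangements n" and "y \<le> n"
  shows "card {v \<in> free_values y \<sigma>. P v} = card {j\<in>{1..n}. y < j \<and> \<sigma> j \<le> y \<and> P (\<sigma> j)}"
proof -
  note E = derangementsD[OF d]
  have "{v \<in> free_values y \<sigma>. P v} = \<sigma> ` {j\<in>{1..n}. y < j \<and> \<sigma> j \<le> y \<and> P (\<sigma> j)}"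
  proof (intro set_eqI iffI)
    fix v assume v: "v \<in> {v \<in> free_values y \<sigma>. P v}"
    then have "v \<in> \<sigma> ` {1..n}" using permutes_image[OF E(1)] \<open>y \<le> n\<close> by (auto simp: free_values_def)
    then obtain j where j: "j \<in> {1..n}" "v = \<sigma> j" by blast
    moreover have "j \<notin> {1..y}" using v j(2) by (auto simp: free_values_def)
    ultimately show "v \<in> \<sigma> ` {j\<in>{1..n}. y < j \<and> \<sigma> j \<le> y \<and> P (\<sigma> j)}"
      using v by (auto simp: free_values_def)
  next
    fix v assume "v \<in> \<sigma> ` {j\<in>{1..n}. y < j \<and> \<sigma> j \<le> y \<and> P (\<sigma> j)}"
    then obtain j where j: "j \<in> {1..n}" "y < j" "\<sigma> j \<le> y" "P (\<sigma> j)" "v = \<sigma> j" by blast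
    have "\<sigma> j \<notin> \<sigma> ` {1..y}" using j(2) by (auto simp: inj_eq[OF E(5)])
    then show "v \<in> {v \<in> free_values y \<sigma>. P v}" using j E(3)[of j] by (auto simp: free_values_def)
  qed
  then show ?thesis by (simp add: card_image inj_on_subset[OF E(5)])
qed

lemma sum_card_rows:
  fixes n :: nat
  assumes "S \<subseteq> {1..n} \<times> {1..n}"
  shows "(\<Sum>i\<in>{1..n}. card {j. (i, j) \<in> S}) = card S"
proof -
  have "finite S" using assms by (rule finite_subset) simp
  moreover have "fst ` S \<subseteq> {1..n}" using assms by auto
  ultimately show ?thesis using sum_card_fibers[of S "{1..n}" fst] by (simp add: card_fst_fiber)
qed

lemma sum_card_columns:
  fixes n :: nat
  assumes "S \<subseteq> {1..n} \<times> {1..n}"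
  shows "(\<Sum>j\<in>{1..n}. card {i. (i, j) \<in> S}) = card S"
proof -
  have "finite S" using assms by (rule finite_subset) simp
  moreover have "snd ` S \<subseteq> {1..n}" using assms by auto
  ultimately show ?thesis using sum_card_fibers[of S "{1..n}" snd] by (simp add: card_snd_fiber)
qed

lemma sum_lower_nestings:
  assumes d: "\<sigma> \<in> derangements n"
  shows "(\<Sum>y\<in>{1..n}. lower_nestings \<sigma> y) = card {(i, j) \<in> inversions n \<sigma>. \<sigma> i < i}"
proof -
  note E = derangementsD[OF d]
  have "lower_nestings \<sigma> y = card {j. (y, j) \<in> {(i, j) \<in> inversions n \<sigma>. \<sigma> i < i}}" if y: "y \<in> {1..n}" for y
  proof (cases "\<sigma> y < y")
    case True
    have "0 < \<sigma> y" using E(3)[of y] y by auto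
    then have "lower_nestings \<sigma> y = card {j\<in>{1..n}. y < j \<and> \<sigma> j \<le> y \<and> \<sigma> j < \<sigma> y}"
      using True y card_free_values_derangement[OF d] by (simp add: lower_nestings_def)
    also have "{j\<in>{1..n}. y < j \<and> \<sigma> j \<le> y \<and> \<sigma> j < \<sigma> y} = {j. (y, j) \<in> {(i, j) \<in> inversions n \<sigma>. \<sigma> i < i}}"
      using True y by (auto simp: inversions_def)
    finally show ?thesis .
  qed (auto simp: lower_nestings_def)
  then have "(\<Sum>y\<in>{1..n}. lower_nestings \<sigma> y) = (\<Sum>y\<in>{1..n}. card {j. (y, j) \<in> {(i, j) \<in> inversions n \<sigma>. \<sigma> i < i}})"
    by (rule sum.cong[OF refl])
  also have "\<dots> = card {(i, j) \<in> inversions n \<sigma>. \<sigma> i < i}"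
    by (rule sum_card_rows) (auto simp: inversions_def)
  finally show ?thesis .
qed

lemma sum_upper_nestings:
  assumes d: "\<sigma> \<in> derangements n"
  shows "(\<Sum>y\<in>{1..n}. upper_nestings \<sigma> y) = card {(i, j) \<in> inversions n \<sigma>. j < \<sigma> j}"
proof -
  note E = derangementsD[OF d]
  let ?U = "{(i, j) \<in> inversions n \<sigma>. j < \<sigma> j}"
  have "upper_nestings \<sigma> (\<sigma> j) = card {i. (i, j) \<in> ?U}" if j: "j \<in> {1..n}" for j
  proof -
    have "upper_nestings \<sigma> (\<sigma> j)
        = (\<Sum>i\<in>{1..<\<sigma> j}. if j = i then card {k\<in>{1..<i}. \<sigma> k \<notin> {1..\<sigma> j}} else 0)"
      unfolding upper_nestings_def by (intro sum.cong refl) (auto simp: inj_eq[OF E(5)])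
    also have "\<dots> = (if j < \<sigma> j then card {k\<in>{1..<j}. \<sigma> k \<notin> {1..\<sigma> j}} else 0)"
      using j by simp
    also have "\<dots> = card {i. (i, j) \<in> ?U}"
    proof (cases "j < \<sigma> j")
      case True
      have "\<sigma> k \<notin> {1..\<sigma> j} \<longleftrightarrow> \<sigma> j < \<sigma> k" if "k \<in> {1..<j}" for k
        using E(3)[of k] that j by auto
      moreover have "{i. (i, j) \<in> ?U} = {k\<in>{1..<j}. \<sigma> j < \<sigma> k}"
        using True j by (auto simp: inversions_def)
      ultimately show ?thesis using True by (metis (no_types, lifting) Collect_cong)
    next
      case False
      then show ?thesis by (simp add: inversions_def)
    qed
    finally show ?thesis .
  qed
  then have "(\<Sum>y\<in>{1..n}. upper_nestings \<sigma> y) = (\<Sum>j\<in>{1..n}. card {i. (i, j) \<in> ?U})"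
    using sum.permute[OF E(1), of "upper_nestings \<sigma>"] by simp
  also have "\<dots> = card ?U"
    by (rule sum_card_columns) (auto simp: inversions_def)
  finally show ?thesis .
qed

lemma inversion_excess_excedance_term:
  assumes d: "\<sigma> \<in> derangements n" and y: "y \<in> {1..n}"
  shows "(if \<sigma> y \<notin> {1..y} then card (free_values y \<sigma>) else 0)
    = card {j. (y, j) \<in> {(i, j) \<in> inversions n \<sigma>. \<sigma> j \<le> i \<and> i < \<sigma> i}}"
proof (cases "y < \<sigma> y")
  case True
  have "card (free_values y \<sigma>) = card {j\<in>{1..n}. y < j \<and> \<sigma> j \<le> y}"
    using card_free_values_derangement[OF d, of y "\<lambda>_. True"] y by simp
  also have "{j\<in>{1..n}. y < j \<and> \<sigma> j \<le> y} = {j. (y, j) \<in> {(i, j) \<in> inversions n \<sigma>. \<sigma> j \<le> i \<and> i < \<sigma> i}}"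
    using True y by (auto simp: inversions_def)
  finally show ?thesis using True by simp
next
  case False
  then show ?thesis using derangementsD(3)[OF d, of y] y by (auto simp: inversions_def)
qed

lemma inversion_excess_late_value_term:
  assumes d: "\<sigma> \<in> derangements n" and j: "j \<in> {1..n}"
  shows "(if \<sigma> j \<notin> \<sigma> ` {1..\<sigma> j} then card {i\<in>{1..<\<sigma> j}. \<sigma> i \<notin> {1..\<sigma> j}} else 0)
    = card {i. (i, j) \<in> {(i, j) \<in> inversions n \<sigma>. i < \<sigma> j \<and> \<sigma> j < j}}"
proof (cases "\<sigma> j < j")
  case True
  note E = derangementsD[OF d]
  have "\<sigma> j \<notin> \<sigma> ` {1..\<sigma> j}" using True by (auto simp: inj_eq[OF E(5)])
  moreover have "\<sigma> i \<notin> {1..\<sigma> j} \<longleftrightarrow> \<sigma> j < \<sigma> i" if "i \<in> {1..<\<sigma> j}" for i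
    using E(3)[of i] that True j by auto
  moreover have "{i. (i, j) \<in> {(i, j) \<in> inversions n \<sigma>. i < \<sigma> j \<and> \<sigma> j < j}} = {i\<in>{1..<\<sigma> j}. \<sigma> j < \<sigma> i}"
    using True j by (auto simp: inversions_def)
  ultimately show ?thesis by (metis (no_types, lifting) Collect_cong)
next
  case False
  then have "\<sigma> j \<in> \<sigma> ` {1..\<sigma> j}" using j derangementsD(2)[OF d j] by auto
  then show ?thesis using False by (auto simp: inversions_def)
qed

lemma sum_inversion_excess:
  assumes d: "\<sigma> \<in> derangements n"
  shows "(\<Sum>y\<in>{1..n}. inversion_excess \<sigma> y)
    = card {(i, j) \<in> inversions n \<sigma>. \<sigma> j \<le> i \<and> i < \<sigma> i}
      + card {(i, j) \<in> inversions n \<sigma>. i < \<sigma> j \<and> \<sigma> j < j}"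
proof -
  let ?C1 = "{(i, j) \<in> inversions n \<sigma>. \<sigma> j \<le> i \<and> i < \<sigma> i}"
  let ?C2 = "{(i, j) \<in> inversions n \<sigma>. i < \<sigma> j \<and> \<sigma> j < j}"
  have "(\<Sum>y\<in>{1..n}. inversion_excess \<sigma> y)
      = (\<Sum>y\<in>{1..n}. card {j. (y, j) \<in> ?C1}) + (\<Sum>j\<in>{1..n}. card {i. (i, j) \<in> ?C2})"
    unfolding inversion_excess_def sum.distrib
    using inversion_excess_excedance_term[OF d] inversion_excess_late_value_term[OF d]
      sum.permute[OF derangementsD(1)[OF d],
        of "\<lambda>y. if y \<notin> \<sigma> ` {1..y} then card {i\<in>{1..<y}. \<sigma> i \<notin> {1..y}} else 0"]
    by simp
  also have "\<dots> = card ?C1 + card ?C2"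
  proof -
    have "?C1 \<subseteq> {1..n} \<times> {1..n}" "?C2 \<subseteq> {1..n} \<times> {1..n}" by (auto simp: inversions_def)
    then show ?thesis by (simp only: sum_card_rows sum_card_columns)
  qed
  finally show ?thesis .
qed

lemma nest_stat_eq_card_inversions:
  assumes d: "\<sigma> \<in> derangements n"
  shows "nest_stat n \<sigma> = card {(i, j) \<in> inversions n \<sigma>. j < \<sigma> j} + card {(i, j) \<in> inversions n \<sigma>. \<sigma> i < i}"
proof -
  note E = derangementsD[OF d]
  let ?U = "{(i, j) \<in> inversions n \<sigma>. j < \<sigma> j}" and ?L = "{(i, j) \<in> inversions n \<sigma>. \<sigma> i < i}"
  have "card {j\<in>{1..n}. (j < i \<and> i < \<sigma> i \<and> \<sigma> i < \<sigma> j) \<or> (\<sigma> j < \<sigma> i \<and> \<sigma> i \<le> i \<and> i < j)}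
      = card {j. (j, i) \<in> ?U} + card {j. (i, j) \<in> ?L}" if i: "i \<in> {1..n}" for i
  proof -
    have "{j\<in>{1..n}. (j < i \<and> i < \<sigma> i \<and> \<sigma> i < \<sigma> j) \<or> (\<sigma> j < \<sigma> i \<and> \<sigma> i \<le> i \<and> i < j)}
        = {j. (j, i) \<in> ?U} \<union> {j. (i, j) \<in> ?L}"
      using i E(2)[OF i] by (auto simp: inversions_def)
    moreover have "finite {j. (j, i) \<in> ?U}" "finite {j. (i, j) \<in> ?L}"
      by (auto simp: inversions_def intro: finite_subset[of _ "{1..n}"])
    moreover have "{j. (j, i) \<in> ?U} \<inter> {j. (i, j) \<in> ?L} = {}" by (auto simp: inversions_def)
    ultimately show ?thesis by (simp add: card_Un_disjoint)
  qed
  then have "nest_stat n \<sigma> = (\<Sum>i\<in>{1..n}. card {j. (j, i) \<in> ?U}) + (\<Sum>i\<in>{1..n}. card {j. (i, j) \<in> ?L})"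
    unfolding nest_stat_def sum.distrib[symmetric] by (rule sum.cong[OF refl])
  also have "\<dots> = card ?U + card ?L"
  proof -
    have "?U \<subseteq> {1..n} \<times> {1..n}" "?L \<subseteq> {1..n} \<times> {1..n}" by (auto simp: inversions_def)
    then show ?thesis by (simp only: sum_card_rows sum_card_columns)
  qed
  finally show ?thesis .
qed

lemma inv_stat_eq_card_inversions:
  assumes d: "\<sigma> \<in> derangements n"
  shows "inv_stat n \<sigma> = card {(i, j) \<in> inversions n \<sigma>. j < \<sigma> j} + card {(i, j) \<in> inversions n \<sigma>. \<sigma> i < i}
    + (card {(i, j) \<in> inversions n \<sigma>. \<sigma> j \<le> i \<and> i < \<sigma> i}
      + card {(i, j) \<in> inversions n \<sigma>. i < \<sigma> j \<and> \<sigma> j < j})"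
proof -
  note E = derangementsD[OF d]
  let ?U = "{(i, j) \<in> inversions n \<sigma>. j < \<sigma> j}" and ?L = "{(i, j) \<in> inversions n \<sigma>. \<sigma> i < i}"
  let ?C1 = "{(i, j) \<in> inversions n \<sigma>. \<sigma> j \<le> i \<and> i < \<sigma> i}"
  let ?C2 = "{(i, j) \<in> inversions n \<sigma>. i < \<sigma> j \<and> \<sigma> j < j}"
  have split: "inversions n \<sigma> = ?U \<union> ?L \<union> (?C1 \<union> ?C2)"
    using E(2) by (fastforce simp: inversions_def)
  have "finite ?U" "finite ?L" "finite ?C1" "finite ?C2"
    by (auto intro: finite_subset[OF _ finite_inversions])
  moreover have "?U \<inter> ?L = {}" "(?U \<union> ?L) \<inter> (?C1 \<union> ?C2) = {}" "?C1 \<inter> ?C2 = {}"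
    by (auto simp: inversions_def)
  ultimately have "card (?U \<union> ?L \<union> (?C1 \<union> ?C2)) = card ?U + card ?L + (card ?C1 + card ?C2)"
    by (simp add: card_Un_disjoint)
  then have "card (inversions n \<sigma>) = card ?U + card ?L + (card ?C1 + card ?C2)"
    by (subst split)
  moreover have "inv_stat n \<sigma> = card (inversions n \<sigma>)"
    by (simp add: inv_stat_def inversions_def)
  ultimately show ?thesis by simp
qed

fun stat_of :: "stat_kind \<Rightarrow> nat \<Rightarrow> (nat \<Rightarrow> nat) \<Rightarrow> nat" where
  "stat_of Nest n = nest_stat n"
| "stat_of Inv n = inv_stat n"

lemma sum_local_stat:
  assumes "\<sigma> \<in> derangements n"
  shows "(\<Sum>y\<in>{1..n}. local_stat s \<sigma> y) = stat_of s n \<sigma>"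
  using sum_upper_nestings[OF assms] sum_lower_nestings[OF assms] sum_inversion_excess[OF assms]
    nest_stat_eq_card_inversions[OF assms] inv_stat_eq_card_inversions[OF assms]
  by (cases s) (simp_all add: local_stat_def sum.distrib)

lemma card_cycle_peaks:
  assumes d: "\<sigma> \<in> derangements n"
  shows "card {y\<in>{1..n}. is_cycle_peak \<sigma> y} = cpk_stat n \<sigma>"
proof -
  note E = derangementsD[OF d]
  have "y \<in> \<sigma> ` {1..<y} \<longleftrightarrow> inv \<sigma> y < y" if "y \<in> {1..n}" for y
    using that E(3)[of "inv \<sigma> y"] permutes_inverses[OF E(1)]
    by (metis (no_types, lifting) atLeastAtMost_iff atLeastLessThan_iff image_iff)
  moreover have "0 < \<sigma> y" if "y \<in> {1..n}" for y using E(3)[of y] that by auto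
  ultimately show ?thesis
    unfolding cpk_stat_def is_cycle_peak_def by (intro arg_cong[where f = card]) auto
qed

lemma card_excedances:
  assumes d: "\<sigma> \<in> derangements n"
  shows "card {y\<in>{1..n}. is_excedance \<sigma> y} = exc_stat n \<sigma>"
proof -
  have "is_excedance \<sigma> y \<longleftrightarrow> y < \<sigma> y" if "y \<in> {1..n}" for y
    using derangementsD(3)[OF d, of y] that by (auto simp: is_excedance_def)
  then show ?thesis unfolding exc_stat_def by (intro arg_cong[where f = card]) auto
qed

lemma prod_if_else_one: "finite A \<Longrightarrow> (\<Prod>y\<in>A. if P y then c else 1) = c ^ card {y\<in>A. P y}"
  by (simp add: prod.If_cases Int_def)

lemma weight_derangement:
  assumes d: "\<sigma> \<in> derangements n"
  shows "weight s q a b n \<sigma> = q ^ stat_of s n \<sigma> * a ^ cpk_stat n \<sigma> * b ^ exc_stat n \<sigma>"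
  unfolding weight_def step_weight_def prod.distrib power_sum[symmetric]
    prod_if_else_one[OF finite_atLeastAtMost] sum_local_stat[OF d] card_cycle_peaks[OF d] card_excedances[OF d] ..

lemma weighted_sum_derangements:
  "weighted_sum s q a b n (\<lambda>h. if h = 0 then 1 else 0)
    = P3 (derangements n) (stat_of s n) (cpk_stat n) (exc_stat n) q a b"
proof -
  have "weighted_sum s q a b n (\<lambda>h. if h = 0 then 1 else 0)
      = (\<Sum>f\<in>{f \<in> partial_derangements n. open_positions n f = {}}. weight s q a b n f)"
  proof -
    have "finite (open_positions n f)" for f by (simp add: open_positions_def)
    then show ?thesis
      unfolding weighted_sum_def sum.inter_filter[OF finite_partial_derangements] by (intro sum.cong) auto
  qed
  also have "\<dots> = P3 (derangements n) (stat_of s n) (cpk_stat n) (exc_stat n) q a b"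
    unfolding derangements_eq_closed_partial_derangements[symmetric] P3_def
    by (intro sum.cong refl) (simp add: weight_derangement)
  finally show ?thesis .
qed

lemma P3_one: "P3 \<Omega> s1 s2 s3 t1 1 t3 = P2 \<Omega> s1 s3 t1 t3"
  by (simp add: P2_def P3_def)

lemma derangement_gf_cpk_substitution:
  fixes q x t :: real
  assumes "1 + x \<noteq> 0" and "x + t \<noteq> 0" and "1 + x * t \<noteq> 0"
  shows "P2 (derangements n) (stat_of s n) (exc_stat n) q t =
      ((1 + x * t) / (1 + x)) ^ n *
      P3 (derangements n) (stat_of s n) (cpk_stat n) (exc_stat n)
         q ((1 + x)^2 * t / ((x + t) * (1 + x * t))) ((x + t) / (1 + x * t))"
proof -
  define X Y Z where "X = 1 + x" and "Y = x + t" and "Z = 1 + x * t"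
  have "X \<noteq> 0" "Y \<noteq> 0" "Z \<noteq> 0" using assms by (simp_all add: X_def Y_def Z_def)
  moreover have "Y + Z = X * (1 + t)" by (simp add: X_def Y_def Z_def algebra_simps)
  ultimately have "t = Z / X * (X * t / Y) * (Y / Z)" and "1 * (X * t / Y) = Z / X * (X\<^sup>2 * t / (Y * Z))"
    and "1 + t = Z / X * (1 + Y / Z)"
    by (simp_all add: field_simps power2_eq_square)
  note conjugate = weighted_sum_conjugate[OF this, of s q n]
  let ?\<delta> = "\<lambda>h. if h = 0 then 1 else (0::real)"
  have "P2 (derangements n) (stat_of s n) (exc_stat n) q t = weighted_sum s q 1 t n ?\<delta>"
    by (simp add: weighted_sum_derangements P3_one)
  also have "\<dots> = (Z / X) ^ n * weighted_sum s q (X\<^sup>2 * t / (Y * Z)) (Y / Z) n (\<lambda>h. (X * t / Y) ^ h * ?\<delta> h)"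
    by (rule conjugate)
  also have "(\<lambda>h. (X * t / Y) ^ h * ?\<delta> h) = ?\<delta>" by auto
  finally show ?thesis by (simp add: weighted_sum_derangements X_def Y_def Z_def)
qed

theorem corollary3p7:
  fixes n :: nat and q x t :: real
  assumes "n \<ge> 1" and "1 + x \<noteq> 0" and "x + t \<noteq> 0" and "1 + x * t \<noteq> 0"
  shows "\<forall>stat \<in> {nest_stat n, inv_stat n}.
    P2 (derangements n) stat (exc_stat n) q t =
      ((1 + x * t) / (1 + x)) ^ n *
      P3 (derangements n) stat (cpk_stat n) (exc_stat n)
         q ((1 + x)^2 * t / ((x + t) * (1 + x * t))) ((x + t) / (1 + x * t))"
proof
  fix stat assume "stat \<in> {nest_stat n, inv_stat n}"
  then have "stat = stat_of Nest n \<or> stat = stat_of Inv n" by simp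
  then obtain s where "stat = stat_of s n" by blast
  then show "P2 (derangements n) stat (exc_stat n) q t =
      ((1 + x * t) / (1 + x)) ^ n *
      P3 (derangements n) stat (cpk_stat n) (exc_stat n)
         q ((1 + x)^2 * t / ((x + t) * (1 + x * t))) ((x + t) / (1 + x * t))"
    using derangement_gf_cpk_substitution[OF assms(2-4)] by simp
qed

end
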